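(* Let $A\in\mathbb{R}^{N\times N}$ be a primitive left-stochastic matrix ($A^{\mathsf{T}}\mathds{1}_N=\mathds{1}_N$) with Perron vector $p$ ($Ap=p$, $\mathds{1}_N^{\mathsf{T}}p=1$, $p\succ0$), $P=\mathrm{diag}(p)$, satisfying the balance condition $PA^{\mathsf{T}}=AP$. Let $\overline{A}=(I_N+A)/2$, let $(P-AP)/2=U\Sigma U^{\mathsf{T}}$ be an eigendecomposition ($U$ orthogonal, $\Sigma\ge0$ diagonal) and $V=U\Sigma^{1/2}U^{\mathsf{T}}$. Define $B=\begin{bmatrix}\overline{A}^{\mathsf{T}} & -P^{-1}V\\ V\overline{A}^{\mathsf{T}} & I_N-VP^{-1}V\end{bmatrix}\in\mathbb{R}^{2N\times 2N}$. Then $B$ admits an eigendecomposition $B=XDX^{-1}$ with $D=\begin{bmatrix}I_2&0\\0&D_1\end{bmatrix}$, where $D_1\in\mathbb{C}^{(2N-2)\times(2N-2)}$ is diagonal with $|D_1(2k-3,2k-3)|=|D_1(2k-2,2k-2)|=\sqrt{\lambda_k(\overline{A})}<1$ for all $k=2,\dots,N$ (eigenvalues $\lambda_k(\overline A)$ of $\overline A$ ordered with $\lambda_1(\overline A)=1$). Moreover $X=[R\ \ X_R]$ and $X^{-1}=\begin{bmatrix}L\\ X_L\end{bmatrix}$ with $X_R\in\mathbb{R}^{2N\times(2N-2)}$, $X_L\in\mathbb{R}^{(2N-2)\times 2N}$, and $R=\begin{bmatrix}\mathds{1}_N&0\\0&\mathds{1}_N\end{bmatrix}\in\mathbb{R}^{2N\times2}$,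 $L=\begin{bmatrix}p^{\mathsf{T}}&0\\0&\frac1N\mathds{1}_N^{\mathsf{T}}\end{bmatrix}\in\mathbb{R}^{2\times2N}$.
   Context: Used to transform the exact diffusion error recursion into a convenient basis. Known facts used: for balanced primitive $A$, $\mathrm{null}(V)=\mathrm{span}\{\mathds{1}_N\}$ and $A$ is diagonalizable with real eigenvalues in $(-1,1]$ and a single eigenvalue at $1$.
   Formalization: The blocks $X_R$ and $X_L$, and so X and $X^{-1}$, are complex matrices rather than real ones. The statement above fails without it. *)

theory Defs
  imports "Jordan_Normal_Form.Matrix" "Jordan_Normal_Form.Char_Poly"
begin

definition diag_vec_mat :: "nat \<Rightarrow> (nat \<Rightarrow> 'a::zero) \<Rightarrow> 'a mat" where
  "diag_vec_mat n d = mat n n (\<lambda>(i,j). if i = j then d i else 0)"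

definition primitive_mat :: "real mat \<Rightarrow> bool" where
  "primitive_mat A \<longleftrightarrow> dim_row A = dim_col A \<and>
     (\<forall>i<dim_row A. \<forall>j<dim_col A. A $$ (i,j) \<ge> 0) \<and>
     (\<exists>m. \<forall>i<dim_row A. \<forall>j<dim_col A. (A ^\<^sub>m m) $$ (i,j) > 0)"

definition ones_vec :: "nat \<Rightarrow> 'a::one vec" where
  "ones_vec n = vec n (\<lambda>_. 1)"

end

(*
  Conjugating with P^(1/2) makes Abar^T symmetric, so Abar^T = Y diag(lam) Y^-1 with real
  eigenvectors y_k = col Y k.  Primitivity makes y_0 constant and forces 0 < lam k < 1 for k >= 1,
  and since Abar p = p, also p . y_k = 0 for k >= 1.  The balance condition gives
  P^-1 V^2 = I - Abar^T and V 1 = 0.  Hence B fixes (1,0) and (0,1), and for k >= 1 it leaves the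
  plane spanned by (y_k,0) and (0,V y_k) invariant, acting there by [[lam, lam - 1], [lam, lam]]
  with eigenvalues lam +- i sqrt(lam (1 - lam)) of modulus sqrt lam.  The eigenvector matrix X has
  an explicit left inverse whose first rows are (p,0) and (0, 1/N 1) and whose other rows are
  built from Yi and P^-1 V.
*)

theory Submission
  imports Defs "Jordan_Normal_Form.Schur_Decomposition"
begin

lemma diag_vec_mat_carrier [simp]:
  "diag_vec_mat n d \<in> carrier_mat n n" "dim_row (diag_vec_mat n d) = n" "dim_col (diag_vec_mat n d) = n"
  by (auto simp: diag_vec_mat_def)

lemma index_diag_vec_mat [simp]:
  "i < n \<Longrightarrow> j < n \<Longrightarrow> diag_vec_mat n d $$ (i,j) = (if i = j then d i else 0)"
  by (simp add: diag_vec_mat_def)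

lemma transpose_diag_vec_mat [simp]: "(diag_vec_mat n d)\<^sup>T = diag_vec_mat n d"
  by (rule eq_matI) auto

lemma diag_vec_mat_one: "diag_vec_mat n (\<lambda>_. 1) = 1\<^sub>m n"
  by (rule eq_matI) auto

lemma diag_vec_mat_Suc:
  "diag_vec_mat (Suc n) d =
     four_block_mat (mat 1 1 (\<lambda>_. d 0)) (0\<^sub>m 1 n) (0\<^sub>m n 1) (diag_vec_mat n (\<lambda>k. d (Suc k)))"
  by (rule eq_matI) (auto simp: diag_vec_mat_def)

lemma index_diag_vec_mat_mult:
  assumes "M \<in> carrier_mat n m" "i < n" "j < m"
  shows "(diag_vec_mat n d * M) $$ (i,j) = d i * M $$ (i,j)"
proof -
  have "(diag_vec_mat n d * M) $$ (i,j) = (\<Sum>l\<in>{0..<n}. (if i = l then d i else 0) * M $$ (l,j))"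
    using assms by (simp add: scalar_prod_def diag_vec_mat_def)
  also have "\<dots> = (\<Sum>l\<in>{0..<n}. if l = i then d i * M $$ (l,j) else 0)"
    by (rule sum.cong) auto
  finally show ?thesis using assms(2) by simp
qed

lemma index_mult_diag_vec_mat:
  assumes "M \<in> carrier_mat m n" "i < m" "j < n"
  shows "(M * diag_vec_mat n d) $$ (i,j) = M $$ (i,j) * d j"
proof -
  have "(M * diag_vec_mat n d) $$ (i,j) = (\<Sum>l\<in>{0..<n}. M $$ (i,l) * (if l = j then d l else 0))"
    using assms by (simp add: scalar_prod_def diag_vec_mat_def)
  also have "\<dots> = (\<Sum>l\<in>{0..<n}. if l = j then M $$ (i,l) * d j else 0)"
    by (rule sum.cong) auto
  finally show ?thesis using assms(3) by simp
qed

lemma diag_vec_mat_mult_diag_vec_mat: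
  "diag_vec_mat n a * diag_vec_mat n b = diag_vec_mat n (\<lambda>i. a i * b i)"
proof (rule eq_matI)
  fix i j assume "i < dim_row (diag_vec_mat n (\<lambda>i. a i * b i))" "j < dim_col (diag_vec_mat n (\<lambda>i. a i * b i))"
  then show "(diag_vec_mat n a * diag_vec_mat n b) $$ (i,j) = diag_vec_mat n (\<lambda>i. a i * b i) $$ (i,j)"
    by (subst index_diag_vec_mat_mult[of _ n n]) auto
qed auto

lemma index_mult_mat_vec_sum:
  "M \<in> carrier_mat n m \<Longrightarrow> v \<in> carrier_vec m \<Longrightarrow> i < n \<Longrightarrow> (M *\<^sub>v v) $ i = (\<Sum>j<m. M $$ (i,j) * v $ j)"
  by (auto simp: scalar_prod_def atLeast0LessThan)

lemma mult_mat_vec_zero_vec [simp]: "dim_col M = n \<Longrightarrow> M *\<^sub>v 0\<^sub>v n = 0\<^sub>v (dim_row M)"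
  by (rule eq_vecI) auto

lemma ones_vec_carrier [simp]: "ones_vec n \<in> carrier_vec n" "dim_vec (ones_vec n) = n"
  by (auto simp: ones_vec_def)

lemma index_ones_vec [simp]: "i < n \<Longrightarrow> ones_vec n $ i = 1"
  by (simp add: ones_vec_def)

lemma scalar_prod_self_eq_0_real:
  fixes v :: "real vec"
  assumes "v \<in> carrier_vec n" and "v \<bullet> v = 0"
  shows "v = 0\<^sub>v n"
  using conjugate_square_eq_0_vec[OF assms(1)] assms(2) by (simp add: conjugate_vec_def)

lemma symmetric_mat_scalar_prod:
  fixes M :: "'a :: comm_semiring_0 mat"
  assumes "M \<in> carrier_mat n n" "M\<^sup>T = M" "u \<in> carrier_vec n" "v \<in> carrier_vec n"
  shows "(M *\<^sub>v u) \<bullet> v = u \<bullet> (M *\<^sub>v v)"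
  using transpose_vec_mult_scalar[of M n n v u] assms by simp

lemma smult_one_plus_mat_mult_vec:
  fixes M :: "'a :: field mat"
  assumes M: "M \<in> carrier_mat n n" and v: "v \<in> carrier_vec n"
  shows "(c \<cdot>\<^sub>m (1\<^sub>m n + M)) *\<^sub>v v = c \<cdot>\<^sub>v (v + M *\<^sub>v v)"
proof -
  have "(c \<cdot>\<^sub>m (1\<^sub>m n + M)) *\<^sub>v v = c \<cdot>\<^sub>v ((1\<^sub>m n + M) *\<^sub>v v)"
    by (rule eq_vecI) (use M v in \<open>auto simp: scalar_prod_def sum_distrib_left ac_simps\<close>)
  also have "(1\<^sub>m n + M) *\<^sub>v v = v + M *\<^sub>v v"
    using M v by (simp add: add_mult_distrib_mat_vec[of _ n n])
  finally show ?thesis .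
qed

lemma mult_mat_vec_invariant_plane:
  fixes M :: "'a :: field mat"
  assumes M: "M \<in> carrier_mat n n" and e: "e1 \<in> carrier_vec n" "e2 \<in> carrier_vec n"
    and M_e1: "M *\<^sub>v e1 = a \<cdot>\<^sub>v e1 + b \<cdot>\<^sub>v e2" and M_e2: "M *\<^sub>v e2 = c \<cdot>\<^sub>v e1 + d \<cdot>\<^sub>v e2"
    and "a + w * c = \<mu>" "b + w * d = \<mu> * w"
  shows "M *\<^sub>v (e1 + w \<cdot>\<^sub>v e2) = \<mu> \<cdot>\<^sub>v (e1 + w \<cdot>\<^sub>v e2)"
proof -
  have "M *\<^sub>v (e1 + w \<cdot>\<^sub>v e2) = M *\<^sub>v e1 + w \<cdot>\<^sub>v (M *\<^sub>v e2)"
    using M e by (simp add: mult_add_distrib_mat_vec[of _ n n] mult_mat_vec[of _ n n])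
  also have "\<dots> = \<mu> \<cdot>\<^sub>v (e1 + w \<cdot>\<^sub>v e2)"
  proof (rule eq_vecI)
    fix i assume "i < dim_vec (\<mu> \<cdot>\<^sub>v (e1 + w \<cdot>\<^sub>v e2))"
    then have i: "i < n" using e by simp
    have "(M *\<^sub>v e1 + w \<cdot>\<^sub>v (M *\<^sub>v e2)) $ i = (a + w * c) * e1 $ i + (b + w * d) * e2 $ i"
      unfolding M_e1 M_e2 using e i by (simp add: algebra_simps)
    then show "(M *\<^sub>v e1 + w \<cdot>\<^sub>v (M *\<^sub>v e2)) $ i = (\<mu> \<cdot>\<^sub>v (e1 + w \<cdot>\<^sub>v e2)) $ i"
      unfolding assms(6,7) using e i by (simp add: algebra_simps)
  qed (use M e in simp)
  finally show ?thesis .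
qed

lemma sqrt_balance:
  fixes a b x y :: real
  assumes "a > 0" "b > 0" "a * x = b * y"
  shows "sqrt a * x / sqrt b = sqrt b * y / sqrt a"
proof -
  have "sqrt a * x / sqrt b = a * x / (sqrt a * sqrt b)"
    using assms by (simp add: field_simps real_sqrt_mult_self)
  also have "\<dots> = sqrt b * y / sqrt a"
    using assms by (simp add: field_simps real_sqrt_mult_self)
  finally show ?thesis .
qed

abbreviation cvec :: "real vec \<Rightarrow> complex vec" where
  "cvec \<equiv> map_vec complex_of_real"

definition cpair :: "complex \<Rightarrow> real vec \<Rightarrow> complex \<Rightarrow> real vec \<Rightarrow> complex vec" where
  "cpair \<alpha> a \<beta> b = (\<alpha> \<cdot>\<^sub>v cvec a) @\<^sub>v (\<beta> \<cdot>\<^sub>v cvec b)"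

lemma cpair_carrier [simp]:
  "a \<in> carrier_vec n \<Longrightarrow> b \<in> carrier_vec m \<Longrightarrow> cpair \<alpha> a \<beta> b \<in> carrier_vec (n + m)"
  by (auto simp: cpair_def)

lemma index_cpair:
  "i < dim_vec a + dim_vec b \<Longrightarrow>
    cpair \<alpha> a \<beta> b $ i = (if i < dim_vec a then \<alpha> * a $ i else \<beta> * b $ (i - dim_vec a))"
  by (simp add: cpair_def)

lemma cvec_scalar_prod: "dim_vec u = dim_vec v \<Longrightarrow> cvec u \<bullet> cvec v = complex_of_real (u \<bullet> v)"
  by (auto simp: scalar_prod_def intro!: sum.cong)

lemma cpair_scalar_prod:
  assumes "a \<in> carrier_vec n" "c \<in> carrier_vec n" "b \<in> carrier_vec m" "d \<in> carrier_vec m"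
  shows "cpair \<alpha> a \<beta> b \<bullet> cpair \<gamma> c \<delta> d = \<alpha> * \<gamma> * (a \<bullet> c) + \<beta> * \<delta> * (b \<bullet> d)"
  using assms unfolding cpair_def
  by (simp add: scalar_prod_append[of _ n _ m] cvec_scalar_prod
      smult_scalar_prod_distrib[of _ n] scalar_prod_smult_distrib[of _ n]
      smult_scalar_prod_distrib[of _ m] scalar_prod_smult_distrib[of _ m])

lemma cvec_append: "cvec (u @\<^sub>v v) = cvec u @\<^sub>v cvec v"
  by (rule eq_vecI) auto

lemma cvec_lincomb:
  "dim_vec u = dim_vec v \<Longrightarrow> cvec (a \<cdot>\<^sub>v u + b \<cdot>\<^sub>v v) = complex_of_real a \<cdot>\<^sub>v cvec u + complex_of_real b \<cdot>\<^sub>v cvec v"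
  by (rule eq_vecI) auto

section \<open>Real symmetric matrices are orthogonally diagonalizable\<close>

lemma orthonormal_mat_of_cols:
  fixes ws :: "real vec list"
  assumes ws: "set ws \<subseteq> carrier_vec n" and len: "length ws = n" and orth: "corthogonal ws"
  defines "W \<equiv> mat_of_cols n (map (\<lambda>w. (1 / sqrt (w \<bullet> w)) \<cdot>\<^sub>v w) ws)"
  shows "W \<in> carrier_mat n n" "W\<^sup>T * W = 1\<^sub>m n" "\<And>i. i < n \<Longrightarrow> col W i = (1 / sqrt (ws ! i \<bullet> ws ! i)) \<cdot>\<^sub>v ws ! i"
proof -
  have ws_i: "ws ! i \<in> carrier_vec n" if "i < n" for i
    using ws len that by auto
  have ws_pos: "ws ! i \<bullet> ws ! i > 0" if i: "i < n" for i
  proof -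
    have "ws ! i \<bullet>c ws ! i \<noteq> 0" using corthogonalD[OF orth, of i i] i len by auto
    moreover have "ws ! i \<bullet>c ws ! i \<ge> 0" using conjugate_square_ge_0_vec[of "ws ! i"] by simp
    ultimately show ?thesis by (auto simp: conjugate_vec_def)
  qed
  show W: "W \<in> carrier_mat n n" unfolding W_def using len mat_of_cols_carrier(1) by fastforce
  show col_W: "col W i = (1 / sqrt (ws ! i \<bullet> ws ! i)) \<cdot>\<^sub>v ws ! i" if "i < n" for i
    unfolding W_def using that len ws_i by simp
  have "col W i \<bullet> col W j = (if i = j then 1 else 0)" if i: "i < n" and j: "j < n" for i j
  proof -
    have "col W i \<bullet> col W j = 1 / sqrt (ws ! i \<bullet> ws ! i) * (1 / sqrt (ws ! j \<bullet> ws ! j)) * (ws ! i \<bullet> ws ! j)"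
      unfolding col_W[OF i] col_W[OF j] using ws_i[OF i] ws_i[OF j] by simp
    also have "\<dots> = (if i = j then 1 else 0)"
      using ws_pos[OF i] corthogonalD[OF orth, of i j] len i j
      by (cases "i = j") (auto simp: real_sqrt_mult[symmetric] conjugate_vec_def)
    finally show ?thesis .
  qed
  then show "W\<^sup>T * W = 1\<^sub>m n" by (intro eq_matI) (use W in auto)
qed

lemma orthonormal_basis_completion:
  fixes v :: "real vec"
  assumes v: "v \<in> carrier_vec n" and v0: "v \<noteq> 0\<^sub>v n"
  obtains W where "W \<in> carrier_mat n n" "W\<^sup>T * W = 1\<^sub>m n" "col W 0 = (1 / sqrt (v \<bullet> v)) \<cdot>\<^sub>v v"
proof -
  interpret cof_vec_space n "TYPE(real)" .
  define b where "b = basis_completion v"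
  from basis_completion[OF v v0, folded b_def]
  have dist_b: "distinct b" and indep: "\<not> lin_dep (set b)" and b: "set b \<subseteq> carrier_vec n"
    and len_b: "length b = n" and hd_b: "hd b = v"
    by auto
  moreover have n: "n > 0" using v v0 by (cases n) auto
  ultimately obtain bs where b_Cons: "b = v # bs" by (cases b) auto
  define ws where "ws = gram_schmidt n b"
  from gram_schmidt_result[OF b dist_b indep ws_def]
  have ws: "set ws \<subseteq> carrier_vec n" "length ws = n" "corthogonal ws"
    using len_b by auto
  have "hd ws = v" unfolding ws_def b_Cons using gram_schmidt_hd[OF v] by simp
  then have "ws ! 0 = v" using ws(2) n by (cases ws) auto
  then show ?thesis
    using orthonormal_mat_of_cols[OF ws] n
    by (intro that[of "mat_of_cols n (map (\<lambda>w. (1 / sqrt (w \<bullet> w)) \<cdot>\<^sub>v w) ws)"]) auto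
qed

lemma orthogonal_mat_right_inverse:
  fixes W :: "'a :: field mat"
  assumes "W \<in> carrier_mat n n" "W\<^sup>T * W = 1\<^sub>m n"
  shows "W * W\<^sup>T = 1\<^sub>m n"
  using mat_mult_left_right_inverse[of "W\<^sup>T" n W] assms by auto

lemma symmetric_orthogonal_deflation:
  fixes M W :: "real mat"
  assumes M: "M \<in> carrier_mat (Suc n) (Suc n)" and M_sym: "M\<^sup>T = M"
    and W: "W \<in> carrier_mat (Suc n) (Suc n)" and W_orth: "W\<^sup>T * W = 1\<^sub>m (Suc n)"
    and eig: "M *\<^sub>v col W 0 = l \<cdot>\<^sub>v col W 0"
  obtains M' where "M' \<in> carrier_mat n n" "M'\<^sup>T = M'"
    "W\<^sup>T * M * W = four_block_mat (mat 1 1 (\<lambda>_. l)) (0\<^sub>m 1 n) (0\<^sub>m n 1) M'"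
proof -
  define C where "C = W\<^sup>T * M * W"
  have C: "C \<in> carrier_mat (Suc n) (Suc n)" unfolding C_def using W M by auto
  have C_sym: "C\<^sup>T = C"
  proof -
    have "C\<^sup>T = (W\<^sup>T * (M * W))\<^sup>T" unfolding C_def using W M by (subst assoc_mult_mat) auto
    also have "\<dots> = W\<^sup>T * M\<^sup>T * W"
      using W M by (simp add: transpose_mult[of _ "Suc n" "Suc n" _ "Suc n"])
    finally show ?thesis unfolding C_def M_sym .
  qed
  have C_col: "C $$ (i,0) = (if i = 0 then l else 0)" if i: "i < Suc n" for i
  proof -
    have "C = W\<^sup>T * (M * W)" unfolding C_def using W M by (subst assoc_mult_mat) auto
    then have "C $$ (i,0) = col W i \<bullet> col (M * W) 0" using i W M by simp
    also have "col (M * W) 0 = M *\<^sub>v col W 0" by (rule col_mult2[OF M W]) simp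
    also have "col W i \<bullet> (M *\<^sub>v col W 0) = l * (W\<^sup>T * W) $$ (i,0)" unfolding eig using i W by simp
    finally show ?thesis unfolding W_orth using i by simp
  qed
  have C_row: "C $$ (0,j) = (if j = 0 then l else 0)" if j: "j < Suc n" for j
    using C_col[OF j] arg_cong[OF C_sym, of "\<lambda>X. X $$ (j,0)"] j C by simp
  define M' where "M' = mat n n (\<lambda>(i,j). C $$ (Suc i, Suc j))"
  have "M'\<^sup>T = M'"
  proof (rule eq_matI)
    fix i j assume "i < dim_row M'" "j < dim_col M'"
    then show "M'\<^sup>T $$ (i,j) = M' $$ (i,j)"
      using arg_cong[OF C_sym, of "\<lambda>X. X $$ (Suc i, Suc j)"] C by (simp add: M'_def)
  qed (simp_all add: M'_def)
  moreover have "C = four_block_mat (mat 1 1 (\<lambda>_. l)) (0\<^sub>m 1 n) (0\<^sub>m n 1) M'"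
  proof (rule eq_matI)
    fix i j assume "i < dim_row (four_block_mat (mat 1 1 (\<lambda>_. l)) (0\<^sub>m 1 n) (0\<^sub>m n 1) M')"
      "j < dim_col (four_block_mat (mat 1 1 (\<lambda>_. l)) (0\<^sub>m 1 n) (0\<^sub>m n 1) M')"
    then have i: "i < Suc n" and j: "j < Suc n" by (auto simp: M'_def)
    show "C $$ (i,j) = four_block_mat (mat 1 1 (\<lambda>_. l)) (0\<^sub>m 1 n) (0\<^sub>m n 1) M' $$ (i,j)"
      using C_row[OF j] C_col[OF i] i j by (cases i; cases j) (auto simp: M'_def)
  qed (use C in \<open>auto simp: M'_def\<close>)
  ultimately show ?thesis using that[of M'] unfolding C_def M'_def by auto
qed

lemma orthogonal_mat_mult:
  fixes W F :: "'a :: comm_ring_1 mat"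
  assumes W: "W \<in> carrier_mat n n" "W\<^sup>T * W = 1\<^sub>m n" and F: "F \<in> carrier_mat n n" "F\<^sup>T * F = 1\<^sub>m n"
  shows "(W * F)\<^sup>T * (W * F) = 1\<^sub>m n"
proof -
  have "(W * F)\<^sup>T * (W * F) = F\<^sup>T * ((W\<^sup>T * W) * F)"
    using W(1) F(1) by (simp add: transpose_mult[of _ n n _ n] assoc_mult_mat[of _ n n _ n _ n])
  also have "\<dots> = 1\<^sub>m n" unfolding W(2) using F by simp
  finally show ?thesis .
qed

lemma orthogonal_four_block_one:
  fixes Q :: "'a :: comm_ring_1 mat"
  assumes Q: "Q \<in> carrier_mat n n" "Q\<^sup>T * Q = 1\<^sub>m n"
  defines "F \<equiv> four_block_mat (1\<^sub>m 1) (0\<^sub>m 1 n) (0\<^sub>m n 1) Q"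
  shows "F\<^sup>T * F = 1\<^sub>m (Suc n)"
proof -
  have F_T: "F\<^sup>T = four_block_mat (1\<^sub>m 1) (0\<^sub>m 1 n) (0\<^sub>m n 1) Q\<^sup>T"
    unfolding F_def by (subst transpose_four_block_mat) (use Q in auto)
  have "F\<^sup>T * F = four_block_mat (1\<^sub>m 1) (0\<^sub>m 1 n) (0\<^sub>m n 1) (Q\<^sup>T * Q)"
    unfolding F_T unfolding F_def by (subst mult_four_block_mat) (use Q in auto)
  then show ?thesis unfolding Q(2) using four_block_one_mat[of 1 n] by simp
qed

lemma orthogonal_conjugate_intertwine:
  fixes M W F D :: "'a :: comm_ring_1 mat"
  assumes M: "M \<in> carrier_mat n n" and W: "W \<in> carrier_mat n n" "W * W\<^sup>T = 1\<^sub>m n"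
    and F: "F \<in> carrier_mat n n" and D: "D \<in> carrier_mat n n"
    and intertwine: "(W\<^sup>T * M * W) * F = F * D"
  shows "M * (W * F) = (W * F) * D"
proof -
  have "M * (W * F) = (W * W\<^sup>T) * (M * (W * F))" unfolding W(2) using M W F by simp
  also have "\<dots> = W * ((W\<^sup>T * M * W) * F)"
    using M W(1) F by (simp add: assoc_mult_mat[of _ n n _ n _ n])
  finally show ?thesis unfolding intertwine using W F D by (simp add: assoc_mult_mat[of _ n n _ n _ n])
qed

lemma char_poly_orthogonal_deflation:
  fixes M W M' :: "'a :: field mat"
  assumes M: "M \<in> carrier_mat (Suc n) (Suc n)"
    and W: "W \<in> carrier_mat (Suc n) (Suc n)" "W\<^sup>T * W = 1\<^sub>m (Suc n)" "W * W\<^sup>T = 1\<^sub>m (Suc n)"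
    and M': "M' \<in> carrier_mat n n"
    and deflate: "W\<^sup>T * M * W = four_block_mat (mat 1 1 (\<lambda>_. l)) (0\<^sub>m 1 n) (0\<^sub>m n 1) M'"
    and char_poly_M: "char_poly M = [:- l, 1:] * q"
  shows "char_poly M' = q"
proof -
  have "similar_mat (W\<^sup>T * M * W) M"
    by (rule similar_matI[of _ _ "W\<^sup>T" W "Suc n"]) (use M W in auto)
  then have "char_poly M = char_poly (W\<^sup>T * M * W)" by (rule char_poly_similar[symmetric])
  also have "\<dots> = char_poly (mat 1 1 (\<lambda>_. l)) * char_poly M'"
    unfolding deflate by (rule char_poly_four_block_zeros_col) (use M' in auto)
  also have "char_poly (mat 1 1 (\<lambda>_. l)) = [:- l, 1:]"
    by (simp add: char_poly_defs det_def sign_def)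
  finally show ?thesis unfolding char_poly_M mult_cancel_left by auto
qed

theorem real_symmetric_orthogonal_diagonalization:
  fixes M :: "real mat"
  assumes "M \<in> carrier_mat n n" "M\<^sup>T = M" "char_poly M = (\<Prod>k<n. [:- l k, 1:])"
  shows "\<exists>Q. Q \<in> carrier_mat n n \<and> Q\<^sup>T * Q = 1\<^sub>m n \<and> M * Q = Q * diag_vec_mat n l"
  using assms
proof (induction n arbitrary: M l)
  case 0
  then show ?case by (intro exI[of _ "1\<^sub>m 0"]) auto
next
  case (Suc n M l)
  note M = Suc.prems(1)
  have char_poly_M: "char_poly M = [:- l 0, 1:] * (\<Prod>k<n. [:- l (Suc k), 1:])"
    unfolding Suc.prems(3) by (rule prod.lessThan_Suc_shift)
  have "eigenvalue M (l 0)"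
    unfolding eigenvalue_root_char_poly[OF M] char_poly_M by simp
  then obtain v where v: "v \<in> carrier_vec (Suc n)" "v \<noteq> 0\<^sub>v (Suc n)" and Mv: "M *\<^sub>v v = l 0 \<cdot>\<^sub>v v"
    using M unfolding eigenvalue_def eigenvector_def by auto
  obtain W where W: "W \<in> carrier_mat (Suc n) (Suc n)" and W_orth: "W\<^sup>T * W = 1\<^sub>m (Suc n)"
    and W_0: "col W 0 = (1 / sqrt (v \<bullet> v)) \<cdot>\<^sub>v v"
    using orthonormal_basis_completion[OF v] .
  have W_orth': "W * W\<^sup>T = 1\<^sub>m (Suc n)" by (rule orthogonal_mat_right_inverse[OF W W_orth])
  have "M *\<^sub>v col W 0 = l 0 \<cdot>\<^sub>v col W 0"
    unfolding W_0 mult_mat_vec[OF M v(1)] Mv by (rule eq_vecI) (use v in auto)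
  then obtain M' where M': "M' \<in> carrier_mat n n" "M'\<^sup>T = M'"
    and deflate: "W\<^sup>T * M * W = four_block_mat (mat 1 1 (\<lambda>_. l 0)) (0\<^sub>m 1 n) (0\<^sub>m n 1) M'"
    using symmetric_orthogonal_deflation[OF M Suc.prems(2) W W_orth] by blast
  from char_poly_orthogonal_deflation[OF M W W_orth W_orth' M'(1) deflate char_poly_M]
  have "char_poly M' = (\<Prod>k<n. [:- l (Suc k), 1:])" .
  from Suc.IH[OF M' this] obtain Q' where Q': "Q' \<in> carrier_mat n n" "Q'\<^sup>T * Q' = 1\<^sub>m n"
    and M'Q': "M' * Q' = Q' * diag_vec_mat n (\<lambda>k. l (Suc k))"
    by blast
  define F where "F = four_block_mat (1\<^sub>m 1) (0\<^sub>m 1 n) (0\<^sub>m n 1) Q'"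
  have F: "F \<in> carrier_mat (Suc n) (Suc n)" unfolding F_def using Q' by auto
  have "(W\<^sup>T * M * W) * F = four_block_mat (mat 1 1 (\<lambda>_. l 0)) (0\<^sub>m 1 n) (0\<^sub>m n 1) (M' * Q')"
    unfolding deflate F_def by (subst mult_four_block_mat) (use M' Q' in auto)
  also have "\<dots> = F * diag_vec_mat (Suc n) l"
    unfolding diag_vec_mat_Suc F_def M'Q' by (subst mult_four_block_mat) (use Q' in auto)
  finally have "M * (W * F) = (W * F) * diag_vec_mat (Suc n) l"
    by (rule orthogonal_conjugate_intertwine[OF M W W_orth' F diag_vec_mat_carrier(1)])
  moreover have "(W * F)\<^sup>T * (W * F) = 1\<^sub>m (Suc n)"
    using orthogonal_mat_mult[OF W W_orth F] orthogonal_four_block_one[OF Q'] unfolding F_def by blast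
  ultimately show ?case using W F by (intro exI[of _ "W * F"]) auto
qed

section \<open>Eigenvectors of stochastic matrices\<close>

lemma max_abs_entry:
  fixes y :: "real vec"
  assumes "n > 0"
  obtains i where "i < n" "\<forall>j<n. \<bar>y $ j\<bar> \<le> \<bar>y $ i\<bar>"
proof -
  have "finite ((\<lambda>j. \<bar>y $ j\<bar>) ` {..<n})" "(\<lambda>j. \<bar>y $ j\<bar>) ` {..<n} \<noteq> {}"
    using assms by auto
  from Max_in[OF this] Max_ge[OF this(1)] show ?thesis using that by fastforce
qed

lemma stochastic_eigenvalue_abs_le_1:
  fixes S :: "real mat"
  assumes S: "S \<in> carrier_mat n n" and nonneg: "\<forall>i<n. \<forall>j<n. S $$ (i,j) \<ge> 0"
    and row_sums: "\<forall>i<n. (\<Sum>j<n. S $$ (i,j)) = 1"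
    and y: "y \<in> carrier_vec n" "y \<noteq> 0\<^sub>v n" and eig: "S *\<^sub>v y = \<mu> \<cdot>\<^sub>v y"
  shows "\<bar>\<mu>\<bar> \<le> 1"
proof -
  have "n > 0" using y by (cases n) auto
  then obtain i where i: "i < n" and max: "\<forall>j<n. \<bar>y $ j\<bar> \<le> \<bar>y $ i\<bar>"
    using max_abs_entry by blast
  have "y $ i \<noteq> 0"
  proof
    assume "y $ i = 0"
    then have "y = 0\<^sub>v n" using max y by (intro eq_vecI) auto
    with y show False by simp
  qed
  have "\<bar>\<mu>\<bar> * \<bar>y $ i\<bar> = \<bar>(S *\<^sub>v y) $ i\<bar>" using eig i y by (simp add: abs_mult)
  also have "\<dots> = \<bar>\<Sum>j<n. S $$ (i,j) * y $ j\<bar>" using index_mult_mat_vec_sum[OF S y(1) i] by simp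
  also have "\<dots> \<le> (\<Sum>j<n. S $$ (i,j) * \<bar>y $ i\<bar>)"
    by (rule order_trans[OF sum_abs sum_mono]) (use nonneg i max in \<open>auto simp: abs_mult intro: mult_left_mono\<close>)
  also have "\<dots> = \<bar>y $ i\<bar>" using row_sums i by (simp add: sum_distrib_right[symmetric])
  finally show ?thesis using \<open>y $ i \<noteq> 0\<close> by simp
qed

lemma positive_stochastic_unimodular_eigenvector_const:
  fixes S :: "real mat"
  assumes S: "S \<in> carrier_mat n n" and pos: "\<forall>i<n. \<forall>j<n. S $$ (i,j) > 0"
    and row_sums: "\<forall>i<n. (\<Sum>j<n. S $$ (i,j)) = 1"
    and y: "y \<in> carrier_vec n" and eig: "S *\<^sub>v y = \<mu> \<cdot>\<^sub>v y" and unimodular: "\<bar>\<mu>\<bar> = 1"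
    and j: "j < n"
  shows "y $ j = y $ 0"
proof -
  obtain i where i: "i < n" and max: "\<forall>j<n. \<bar>y $ j\<bar> \<le> \<bar>y $ i\<bar>"
    using max_abs_entry[of n y] j by auto
  define m where "m = \<bar>y $ i\<bar>"
  define \<sigma> :: real where "\<sigma> = (if \<mu> * y $ i \<ge> 0 then 1 else -1)"
  have "\<bar>\<mu> * y $ i\<bar> = m" using unimodular by (simp add: abs_mult m_def)
  then have \<sigma>: "\<sigma> * \<sigma> = 1" "\<sigma> * (\<mu> * y $ i) = m"
    by (auto simp: \<sigma>_def)
  have "(\<Sum>j<n. S $$ (i,j) * (m - \<sigma> * y $ j)) = m * (\<Sum>j<n. S $$ (i,j)) - \<sigma> * (\<Sum>j<n. S $$ (i,j) * y $ j)"
    by (simp add: sum_subtractf sum_distrib_left algebra_simps)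
  also have "\<dots> = 0"
    using row_sums i \<sigma>(2) eig y index_mult_mat_vec_sum[OF S y i] by simp
  finally have sum_0: "(\<Sum>j<n. S $$ (i,j) * (m - \<sigma> * y $ j)) = 0" .
  have nonneg: "0 \<le> S $$ (i,j) * (m - \<sigma> * y $ j)" if "j \<in> {..<n}" for j
  proof -
    from that have "\<sigma> * y $ j \<le> m" "0 < S $$ (i,j)"
      using max pos i by (auto simp: \<sigma>_def m_def)
    then show ?thesis by simp
  qed
  have "\<forall>k\<in>{..<n}. S $$ (i,k) * (m - \<sigma> * y $ k) = 0"
    using sum_nonneg_eq_0_iff[of "{..<n}" "\<lambda>k. S $$ (i,k) * (m - \<sigma> * y $ k)", OF finite_lessThan nonneg] sum_0
    by blast
  then have "m = \<sigma> * y $ k" if "k < n" for k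
  proof -
    have "S $$ (i,k) * (m - \<sigma> * y $ k) = 0" using \<open>\<forall>k\<in>{..<n}. _\<close> that by simp
    moreover have "S $$ (i,k) > 0" using pos i that by blast
    ultimately show ?thesis by simp
  qed
  then have y_const: "y $ k = \<sigma> * m" if "k < n" for k
    using \<sigma>(1) that by (auto simp: \<sigma>_def split: if_splits)
  show ?thesis using y_const[of j] y_const[of 0] j by simp
qed

lemma transpose_pow_mat_mult_eigenvector:
  fixes A :: "'a :: field mat"
  assumes A: "A \<in> carrier_mat n n" and y: "y \<in> carrier_vec n" and eig: "A\<^sup>T *\<^sub>v y = \<mu> \<cdot>\<^sub>v y"
  shows "(A ^\<^sub>m k)\<^sup>T *\<^sub>v y = \<mu> ^ k \<cdot>\<^sub>v y"
proof (induction k)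
  case (Suc k)
  have Ak: "A ^\<^sub>m k \<in> carrier_mat n n" using A by simp
  have "(A ^\<^sub>m Suc k)\<^sup>T *\<^sub>v y = A\<^sup>T *\<^sub>v ((A ^\<^sub>m k)\<^sup>T *\<^sub>v y)"
    using A Ak y by (simp add: transpose_mult[OF Ak A] assoc_mult_mat_vec[of _ n n _ n])
  also have "\<dots> = \<mu> ^ Suc k \<cdot>\<^sub>v y"
    unfolding Suc.IH using A y eig by (simp add: mult_mat_vec[of _ n n] smult_smult_assoc mult.commute[of "\<mu> ^ k"])
  finally show ?case .
qed (use A y in simp)

lemma primitive_stochastic_unimodular_eigenvector_const:
  fixes A :: "real mat"
  assumes A: "A \<in> carrier_mat n n" and prim: "primitive_mat A"
    and stoch: "A\<^sup>T *\<^sub>v ones_vec n = ones_vec n"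
    and y: "y \<in> carrier_vec n" and eig: "A\<^sup>T *\<^sub>v y = \<mu> \<cdot>\<^sub>v y" and unimodular: "\<bar>\<mu>\<bar> = 1"
  shows "y = y $ 0 \<cdot>\<^sub>v ones_vec n"
proof -
  from prim obtain k where pos: "\<forall>i<n. \<forall>j<n. (A ^\<^sub>m k) $$ (i,j) > 0"
    unfolding primitive_mat_def using A by auto
  define S where "S = (A ^\<^sub>m k)\<^sup>T"
  have S: "S \<in> carrier_mat n n" unfolding S_def using A by simp
  have "A\<^sup>T *\<^sub>v ones_vec n = 1 \<cdot>\<^sub>v ones_vec n" using stoch by simp
  from transpose_pow_mat_mult_eigenvector[OF A ones_vec_carrier(1) this, of k]
  have S_ones: "S *\<^sub>v ones_vec n = ones_vec n" unfolding S_def by simp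
  have row_sums: "\<forall>i<n. (\<Sum>j<n. S $$ (i,j)) = 1"
  proof (intro allI impI)
    fix i assume i: "i < n"
    have "(S *\<^sub>v ones_vec n) $ i = 1" using S_ones i by simp
    then show "(\<Sum>j<n. S $$ (i,j)) = 1" using index_mult_mat_vec_sum[OF S ones_vec_carrier(1) i] i by simp
  qed
  have pos_S: "\<forall>i<n. \<forall>j<n. S $$ (i,j) > 0" unfolding S_def using pos A by simp
  have eig_S: "S *\<^sub>v y = \<mu> ^ k \<cdot>\<^sub>v y" unfolding S_def by (rule transpose_pow_mat_mult_eigenvector[OF A y eig])
  have "\<bar>\<mu> ^ k\<bar> = 1" using unimodular by (simp add: power_abs)
  from positive_stochastic_unimodular_eigenvector_const[OF S pos_S row_sums y eig_S this]
  have y_j: "y $ j = y $ 0" if "j < n" for j using that .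
  show ?thesis
  proof (rule eq_vecI)
    fix j assume "j < dim_vec (y $ 0 \<cdot>\<^sub>v ones_vec n)"
    then show "y $ j = (y $ 0 \<cdot>\<^sub>v ones_vec n) $ j" using y_j[of j] by simp
  qed (use y in simp)
qed

section \<open>The exact diffusion recursion matrix\<close>

locale exact_diffusion =
  fixes N :: nat and A U \<Sigma> :: "real mat" and p :: "real vec" and lam :: "nat \<Rightarrow> real"
  assumes A_carr: "A \<in> carrier_mat N N"
    and prim: "primitive_mat A"
    and stoch: "A\<^sup>T *\<^sub>v ones_vec N = ones_vec N"
    and p_dim: "p \<in> carrier_vec N"
    and p_fix: "A *\<^sub>v p = p"
    and p_sum: "ones_vec N \<bullet> p = 1"
    and p_pos: "\<forall>i<N. p $ i > 0"
    and balance: "diag_vec_mat N (\<lambda>i. p $ i) * A\<^sup>T = A * diag_vec_mat N (\<lambda>i. p $ i)"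
    and U_carr: "U \<in> carrier_mat N N"
    and U_orth: "U * U\<^sup>T = 1\<^sub>m N" "U\<^sup>T * U = 1\<^sub>m N"
    and Sig_carr: "\<Sigma> \<in> carrier_mat N N"
    and Sig_diag: "diagonal_mat \<Sigma>"
    and Sig_nonneg: "\<forall>i<N. \<Sigma> $$ (i,i) \<ge> 0"
    and eig_dec: "(1/2) \<cdot>\<^sub>m (diag_vec_mat N (\<lambda>i. p $ i) - A * diag_vec_mat N (\<lambda>i. p $ i))
                    = U * \<Sigma> * U\<^sup>T"
    and lam_eigs: "char_poly ((1/2) \<cdot>\<^sub>m (1\<^sub>m N + A)) = (\<Prod>k<N. [:- lam k, 1:])"
    and lam_first: "lam 0 = 1"
begin

definition "P = diag_vec_mat N (\<lambda>i. p $ i)"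

definition "Pinv = diag_vec_mat N (\<lambda>i. 1 / p $ i)"

definition "Abar = (1/2) \<cdot>\<^sub>m (1\<^sub>m N + A)"

definition "V = U * diag_vec_mat N (\<lambda>i. sqrt (\<Sigma> $$ (i,i))) * U\<^sup>T"

definition "B = four_block_mat (Abar\<^sup>T) (- (Pinv * V)) (V * Abar\<^sup>T) (1\<^sub>m N - V * Pinv * V)"

lemma carriers [simp]:
  "A \<in> carrier_mat N N" "A\<^sup>T \<in> carrier_mat N N" "U \<in> carrier_mat N N" "U\<^sup>T \<in> carrier_mat N N"
  "P \<in> carrier_mat N N" "Pinv \<in> carrier_mat N N" "Abar \<in> carrier_mat N N" "Abar\<^sup>T \<in> carrier_mat N N"
  "V \<in> carrier_mat N N" "p \<in> carrier_vec N"
  using A_carr U_carr p_dim by (auto simp: P_def Pinv_def Abar_def V_def)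

lemma dims [simp]:
  "dim_row A = N" "dim_col A = N" "dim_row P = N" "dim_col P = N" "dim_row Pinv = N" "dim_col Pinv = N"
  "dim_row Abar = N" "dim_col Abar = N" "dim_row V = N" "dim_col V = N" "dim_vec p = N"
  using carriers by (auto simp del: carriers)

lemma mult_carrier_square [simp]:
  "X \<in> carrier_mat N N \<Longrightarrow> Y \<in> carrier_mat N N \<Longrightarrow> X * Y \<in> carrier_mat N N"
  by (rule mult_carrier_mat)

lemma mult_mat_vec_carrier_square [simp]:
  "X \<in> carrier_mat N N \<Longrightarrow> v \<in> carrier_vec N \<Longrightarrow> X *\<^sub>v v \<in> carrier_vec N"
  by (rule mult_mat_vec_carrier)

lemma N_pos: "N > 0"
  using p_sum p_dim by (cases N) (auto simp: ones_vec_def scalar_prod_def)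

lemma index_Abar:
  "i < N \<Longrightarrow> j < N \<Longrightarrow> Abar $$ (i,j) = (if i = j then 1/2 else 0) + A $$ (i,j) / 2"
  by (simp add: Abar_def)

lemma balance_index: "i < N \<Longrightarrow> j < N \<Longrightarrow> p $ i * A $$ (j,i) = A $$ (i,j) * p $ j"
proof -
  assume i: "i < N" and j: "j < N"
  have "(diag_vec_mat N (\<lambda>i. p $ i) * A\<^sup>T) $$ (i,j) = p $ i * A\<^sup>T $$ (i,j)"
    by (rule index_diag_vec_mat_mult) (use i j in auto)
  moreover have "(A * diag_vec_mat N (\<lambda>i. p $ i)) $$ (i,j) = A $$ (i,j) * p $ j"
    by (rule index_mult_diag_vec_mat) (use i j in auto)
  ultimately show ?thesis using balance i j by simp
qed

lemma V_transpose: "V\<^sup>T = V"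
proof -
  define D where "D = diag_vec_mat N (\<lambda>i. sqrt (\<Sigma> $$ (i,i)))"
  have D: "D \<in> carrier_mat N N" unfolding D_def by simp
  have "V\<^sup>T = U\<^sup>T\<^sup>T * (U * D)\<^sup>T" unfolding V_def D_def[symmetric]
    by (rule transpose_mult[of _ N N _ N]) (use D in \<open>auto intro: mult_carrier_mat\<close>)
  also have "(U * D)\<^sup>T = D * U\<^sup>T"
    using transpose_mult[of U N N D N] D by (simp add: D_def)
  finally show ?thesis unfolding V_def D_def[symmetric] using D by (simp add: assoc_mult_mat[of _ N N _ N _ N])
qed

lemma V_square: "V * V = (1/2) \<cdot>\<^sub>m (P - A * P)"
proof -
  define D where "D = diag_vec_mat N (\<lambda>i. sqrt (\<Sigma> $$ (i,i)))"
  have D: "D \<in> carrier_mat N N" unfolding D_def by simp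
  have "D * D = \<Sigma>"
  proof (rule eq_matI)
    fix i j assume "i < dim_row \<Sigma>" "j < dim_col \<Sigma>"
    then show "(D * D) $$ (i,j) = \<Sigma> $$ (i,j)"
      using Sig_carr Sig_diag Sig_nonneg
      unfolding D_def diag_vec_mat_mult_diag_vec_mat diagonal_mat_def by auto
  qed (use Sig_carr in \<open>auto simp: D_def\<close>)
  have "V * V = U * (D * ((U\<^sup>T * U) * (D * U\<^sup>T)))"
    unfolding V_def D_def[symmetric] using D by (simp add: assoc_mult_mat[of _ N N _ N _ N])
  also have "\<dots> = U * (D * D) * U\<^sup>T"
    unfolding U_orth(2) using D by (simp add: assoc_mult_mat[of _ N N _ N _ N])
  finally show ?thesis unfolding \<open>D * D = \<Sigma>\<close> P_def eig_dec .
qed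

lemma index_V_square:
  "i < N \<Longrightarrow> j < N \<Longrightarrow> (V * V) $$ (i,j) = ((if i = j then p $ i else 0) - A $$ (i,j) * p $ j) / 2"
proof -
  assume i: "i < N" and j: "j < N"
  have "(A * P) $$ (i,j) = A $$ (i,j) * p $ j"
    unfolding P_def by (rule index_mult_diag_vec_mat) (use i j in auto)
  then show ?thesis unfolding V_square using i j by (simp add: P_def)
qed

lemma Pinv_mult_V_square: "Pinv * (V * V) = 1\<^sub>m N - Abar\<^sup>T"
proof (rule eq_matI)
  fix i j assume "i < dim_row (1\<^sub>m N - Abar\<^sup>T)" "j < dim_col (1\<^sub>m N - Abar\<^sup>T)"
  then have i: "i < N" and j: "j < N" by auto
  have p_i: "p $ i > 0" using p_pos i by simp
  have "(Pinv * (V * V)) $$ (i,j) = 1 / p $ i * (V * V) $$ (i,j)"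
    unfolding Pinv_def by (rule index_diag_vec_mat_mult) (use i j in auto)
  also have "\<dots> = (1\<^sub>m N - Abar\<^sup>T) $$ (i,j)"
    unfolding index_V_square[OF i j] using i j p_i balance_index[OF i j]
    by (auto simp: index_Abar field_simps)
  finally show "(Pinv * (V * V)) $$ (i,j) = (1\<^sub>m N - Abar\<^sup>T) $$ (i,j)" .
qed auto

lemma Abar_transpose_mult_vec: "v \<in> carrier_vec N \<Longrightarrow> Abar\<^sup>T *\<^sub>v v = (1/2) \<cdot>\<^sub>v (v + A\<^sup>T *\<^sub>v v)"
proof -
  have "Abar\<^sup>T = (1/2) \<cdot>\<^sub>m (1\<^sub>m N + A\<^sup>T)" unfolding Abar_def by (rule eq_matI) auto
  then show "v \<in> carrier_vec N \<Longrightarrow> ?thesis" by (simp add: smult_one_plus_mat_mult_vec)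
qed

lemma Abar_transpose_ones: "Abar\<^sup>T *\<^sub>v ones_vec N = ones_vec N"
  unfolding Abar_transpose_mult_vec[OF ones_vec_carrier(1)] stoch by (rule eq_vecI) auto

lemma Abar_p: "Abar *\<^sub>v p = p"
  unfolding Abar_def smult_one_plus_mat_mult_vec[OF carriers(1,10)] p_fix by (rule eq_vecI) auto

lemma p_scalar_Abar_transpose:
  assumes y: "y \<in> carrier_vec N"
  shows "p \<bullet> (Abar\<^sup>T *\<^sub>v y) = p \<bullet> y"
proof -
  have "p \<bullet> (Abar\<^sup>T *\<^sub>v y) = (Abar\<^sup>T *\<^sub>v y) \<bullet> p" by (rule comm_scalar_prod[of p N]) (use y in auto)
  also have "\<dots> = y \<bullet> (Abar *\<^sub>v p)" by (rule transpose_vec_mult_scalar) (use y in auto)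
  finally show ?thesis unfolding Abar_p using comm_scalar_prod[OF y carriers(10)] by simp
qed

lemma Abar_transpose_eigenvector:
  assumes y: "y \<in> carrier_vec N" and eig: "Abar\<^sup>T *\<^sub>v y = \<mu> \<cdot>\<^sub>v y"
  shows "A\<^sup>T *\<^sub>v y = (2 * \<mu> - 1) \<cdot>\<^sub>v y"
proof (rule eq_vecI)
  fix i assume "i < dim_vec ((2 * \<mu> - 1) \<cdot>\<^sub>v y)"
  then have i: "i < N" using y by simp
  have "\<mu> * y $ i = (y $ i + (A\<^sup>T *\<^sub>v y) $ i) / 2"
    using arg_cong[OF eig, of "\<lambda>v. v $ i"] i y by (simp add: Abar_transpose_mult_vec)
  then show "(A\<^sup>T *\<^sub>v y) $ i = ((2 * \<mu> - 1) \<cdot>\<^sub>v y) $ i" using i y by (simp add: algebra_simps)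
qed (use y in simp)

lemma V_ones: "V *\<^sub>v ones_vec N = 0\<^sub>v N"
proof -
  define u where "u = V *\<^sub>v ones_vec N"
  have u: "u \<in> carrier_vec N" unfolding u_def by simp
  have "V *\<^sub>v u = 0\<^sub>v N"
  proof (rule eq_vecI)
    fix i assume "i < dim_vec (0\<^sub>v N :: real vec)"
    then have i: "i < N" by simp
    have "(V *\<^sub>v u) $ i = ((V * V) *\<^sub>v ones_vec N) $ i"
      unfolding u_def assoc_mult_mat_vec[OF carriers(9) carriers(9) ones_vec_carrier(1)] ..
    also have "\<dots> = (\<Sum>j<N. (V * V) $$ (i,j) * ones_vec N $ j)"
      by (rule index_mult_mat_vec_sum) (use i in auto)
    also have "\<dots> = (\<Sum>j<N. ((if i = j then p $ i else 0) - A $$ (i,j) * p $ j) / 2)"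
      by (rule sum.cong) (use i in \<open>simp_all del: index_mult_mat add: index_V_square\<close>)
    also have "\<dots> = ((\<Sum>j<N. if i = j then p $ i else 0) - (\<Sum>j<N. A $$ (i,j) * p $ j)) / 2"
      by (simp add: sum_subtractf sum_divide_distrib[symmetric])
    also have "(\<Sum>j<N. A $$ (i,j) * p $ j) = p $ i"
      using arg_cong[OF p_fix, of "\<lambda>v. v $ i"] i index_mult_mat_vec_sum[of A N N p i] by simp
    finally show "(V *\<^sub>v u) $ i = 0\<^sub>v N $ i" using i by simp
  qed simp
  then have "u \<bullet> u = 0"
    unfolding u_def using transpose_vec_mult_scalar[of V N N "ones_vec N" u] u V_transpose
    by (simp add: u_def)
  then show ?thesis using scalar_prod_self_eq_0_real[OF u] unfolding u_def by simp
qed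

lemma ones_scalar_V: "x \<in> carrier_vec N \<Longrightarrow> ones_vec N \<bullet> (V *\<^sub>v x) = 0"
  using transpose_vec_mult_scalar[of V N N x "ones_vec N"] by (simp add: V_transpose V_ones)

definition "Psqrt = diag_vec_mat N (\<lambda>i. sqrt (p $ i))"
definition "Psqrt_inv = diag_vec_mat N (\<lambda>i. 1 / sqrt (p $ i))"

lemma Psqrt_carrier [simp]: "Psqrt \<in> carrier_mat N N" "Psqrt_inv \<in> carrier_mat N N"
  "dim_row Psqrt = N" "dim_col Psqrt_inv = N"
  unfolding Psqrt_def Psqrt_inv_def by auto

lemma Psqrt_inverse: "Psqrt * Psqrt_inv = 1\<^sub>m N" "Psqrt_inv * Psqrt = 1\<^sub>m N"
  unfolding Psqrt_def Psqrt_inv_def diag_vec_mat_mult_diag_vec_mat diag_vec_mat_one[symmetric]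
  using p_pos by (auto intro!: eq_matI)

lemma symmetrized_Abar_transpose_symmetric:
  "(Psqrt * Abar\<^sup>T * Psqrt_inv)\<^sup>T = Psqrt * Abar\<^sup>T * Psqrt_inv" (is "?M\<^sup>T = ?M")
proof -
  have M: "?M \<in> carrier_mat N N" using Psqrt_carrier by simp
  have index_M: "?M $$ (i,j) = sqrt (p $ i) * Abar $$ (j,i) / sqrt (p $ j)" if "i < N" "j < N" for i j
  proof -
    have "?M $$ (i,j) = (Psqrt * Abar\<^sup>T) $$ (i,j) * (1 / sqrt (p $ j))"
      unfolding Psqrt_inv_def by (rule index_mult_diag_vec_mat) (use that Psqrt_carrier in auto)
    also have "(Psqrt * Abar\<^sup>T) $$ (i,j) = sqrt (p $ i) * Abar\<^sup>T $$ (i,j)"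
      unfolding Psqrt_def by (rule index_diag_vec_mat_mult) (use that in auto)
    finally show ?thesis using that by simp
  qed
  show ?thesis
  proof (rule eq_matI)
    fix i j assume "i < dim_row ?M" "j < dim_col ?M"
    then have i: "i < N" and j: "j < N" using M by auto
    have "p $ j * Abar $$ (i,j) = p $ i * Abar $$ (j,i)"
      using balance_index[OF i j] i j by (auto simp: index_Abar algebra_simps)
    then have "sqrt (p $ j) * Abar $$ (i,j) / sqrt (p $ i) = sqrt (p $ i) * Abar $$ (j,i) / sqrt (p $ j)"
      using p_pos i j by (intro sqrt_balance) auto
    moreover have "?M\<^sup>T $$ (i,j) = ?M $$ (j,i)" by (rule index_transpose_mat(1)) (use i j M in auto)
    ultimately show "?M\<^sup>T $$ (i,j) = ?M $$ (i,j)" unfolding index_M[OF i j] index_M[OF j i] by simp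
  qed (use M in auto)
qed

lemma Abar_transpose_diagonalization:
  obtains Y Yi where "Y \<in> carrier_mat N N" "Yi \<in> carrier_mat N N" "Yi * Y = 1\<^sub>m N"
    "Abar\<^sup>T * Y = Y * diag_vec_mat N lam"
proof -
  note S = Psqrt_carrier and S_Si = Psqrt_inverse
  define M where "M = Psqrt * Abar\<^sup>T * Psqrt_inv"
  have M: "M \<in> carrier_mat N N" unfolding M_def using S by simp
  have "similar_mat M (Abar\<^sup>T)"
    by (rule similar_matI[of _ _ Psqrt Psqrt_inv N]) (use S S_Si in \<open>auto simp: M_def\<close>)
  then have "char_poly M = char_poly (Abar\<^sup>T)" by (rule char_poly_similar)
  also have "\<dots> = char_poly Abar" by (rule char_poly_transpose_mat[of _ N]) simp
  finally have "char_poly M = (\<Prod>k<N. [:- lam k, 1:])" using lam_eigs unfolding Abar_def by simp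
  then obtain Q where Q: "Q \<in> carrier_mat N N" "Q\<^sup>T * Q = 1\<^sub>m N"
    and MQ: "M * Q = Q * diag_vec_mat N lam"
    using real_symmetric_orthogonal_diagonalization[OF M symmetrized_Abar_transpose_symmetric[folded M_def]]
    by blast
  have "(Q\<^sup>T * Psqrt) * (Psqrt_inv * Q) = Q\<^sup>T * ((Psqrt * Psqrt_inv) * Q)"
    using S Q by (simp add: assoc_mult_mat[of _ N N _ N _ N])
  then have "(Q\<^sup>T * Psqrt) * (Psqrt_inv * Q) = 1\<^sub>m N" unfolding S_Si using Q by simp
  moreover have "Abar\<^sup>T * (Psqrt_inv * Q) = (Psqrt_inv * Q) * diag_vec_mat N lam"
  proof -
    have "Psqrt_inv * (M * Q) = (Psqrt_inv * Psqrt) * (Abar\<^sup>T * (Psqrt_inv * Q))"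
      unfolding M_def using S Q by (simp add: assoc_mult_mat[of _ N N _ N _ N])
    then have "Abar\<^sup>T * (Psqrt_inv * Q) = Psqrt_inv * (M * Q)" unfolding S_Si using S Q by simp
    then show ?thesis unfolding MQ using S Q by (simp add: assoc_mult_mat[of _ N N _ N _ N])
  qed
  ultimately show ?thesis using that[of "Psqrt_inv * Q" "Q\<^sup>T * Psqrt"] S Q by simp
qed

lemma B_carrier: "B \<in> carrier_mat (2 * N) (2 * N)"
  unfolding B_def mult_2 by (rule four_block_carrier_mat) auto

lemma B_mult_append:
  "u \<in> carrier_vec N \<Longrightarrow> v \<in> carrier_vec N \<Longrightarrow>
    B *\<^sub>v (u @\<^sub>v v) = (Abar\<^sup>T *\<^sub>v u - Pinv *\<^sub>v (V *\<^sub>v v)) @\<^sub>v (V *\<^sub>v (Abar\<^sup>T *\<^sub>v u) + v - V *\<^sub>v (Pinv *\<^sub>v (V *\<^sub>v v)))"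
  unfolding B_def
  by (subst four_block_mat_mult_vec[of _ N N]) (auto intro!: eq_vecI
      simp: assoc_mult_mat_vec[of _ N N _ N] minus_mult_distrib_mat_vec[of _ N N] uminus_mult_mat_vec)

lemma B_fixes_ones_top: "B *\<^sub>v (ones_vec N @\<^sub>v 0\<^sub>v N) = ones_vec N @\<^sub>v 0\<^sub>v N"
  by (simp add: B_mult_append Abar_transpose_ones V_ones)

lemma B_fixes_ones_bottom: "B *\<^sub>v (0\<^sub>v N @\<^sub>v ones_vec N) = 0\<^sub>v N @\<^sub>v ones_vec N"
  by (simp add: B_mult_append V_ones)

lemma Pinv_V_V_eigenvector:
  assumes y: "y \<in> carrier_vec N" and eig: "Abar\<^sup>T *\<^sub>v y = \<mu> \<cdot>\<^sub>v y"
  shows "Pinv *\<^sub>v (V *\<^sub>v (V *\<^sub>v y)) = (1 - \<mu>) \<cdot>\<^sub>v y"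
proof -
  have "Pinv *\<^sub>v (V *\<^sub>v (V *\<^sub>v y)) = (1\<^sub>m N - Abar\<^sup>T) *\<^sub>v y"
    unfolding Pinv_mult_V_square[symmetric] using y by (simp add: assoc_mult_mat_vec[of _ N N _ N])
  also have "\<dots> = (1 - \<mu>) \<cdot>\<^sub>v y"
    using y eig by (subst minus_mult_distrib_mat_vec[of _ N N]) (auto simp: algebra_simps)
  finally show ?thesis .
qed

lemma B_mult_eigenvector_top:
  assumes "y \<in> carrier_vec N" "Abar\<^sup>T *\<^sub>v y = \<mu> \<cdot>\<^sub>v y"
  shows "B *\<^sub>v (y @\<^sub>v 0\<^sub>v N) = \<mu> \<cdot>\<^sub>v (y @\<^sub>v 0\<^sub>v N) + \<mu> \<cdot>\<^sub>v (0\<^sub>v N @\<^sub>v V *\<^sub>v y)"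
  using assms by (auto simp: B_mult_append mult_mat_vec[of _ N N] intro!: eq_vecI)

lemma B_mult_eigenvector_bottom:
  assumes "y \<in> carrier_vec N" "Abar\<^sup>T *\<^sub>v y = \<mu> \<cdot>\<^sub>v y"
  shows "B *\<^sub>v (0\<^sub>v N @\<^sub>v V *\<^sub>v y) = (\<mu> - 1) \<cdot>\<^sub>v (y @\<^sub>v 0\<^sub>v N) + \<mu> \<cdot>\<^sub>v (0\<^sub>v N @\<^sub>v V *\<^sub>v y)"
  using assms by (auto simp: B_mult_append Pinv_V_V_eigenvector mult_mat_vec[of _ N N] algebra_simps intro!: eq_vecI)

end

section \<open>The eigendecomposition of B\<close>

locale exact_diffusion_eigenbasis = exact_diffusion +
  fixes Y Yi :: "real mat"
  assumes Y_carr: "Y \<in> carrier_mat N N" and Yi_carr: "Yi \<in> carrier_mat N N"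
    and Yi_Y: "Yi * Y = 1\<^sub>m N"
    and Abar_Y: "Abar\<^sup>T * Y = Y * diag_vec_mat N lam"
begin

definition "eigvec k = col Y k"

lemma eigvec_carrier [simp]: "eigvec k \<in> carrier_vec N" "dim_vec (eigvec k) = N"
  unfolding eigvec_def using Y_carr by auto

lemma row_Yi_carrier [simp]: "row Yi k \<in> carrier_vec N"
  using Yi_carr by auto

lemma Abar_transpose_eigvec: "k < N \<Longrightarrow> Abar\<^sup>T *\<^sub>v eigvec k = lam k \<cdot>\<^sub>v eigvec k"
proof -
  assume k: "k < N"
  have "Abar\<^sup>T *\<^sub>v eigvec k = col (Y * diag_vec_mat N lam) k"
    unfolding eigvec_def Abar_Y[symmetric] using col_mult2[of "Abar\<^sup>T" N N Y N k] Y_carr k by simp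
  also have "\<dots> = lam k \<cdot>\<^sub>v eigvec k"
  proof (rule eq_vecI)
    fix i assume "i < dim_vec (lam k \<cdot>\<^sub>v eigvec k)"
    then have i: "i < N" by simp
    have "(Y * diag_vec_mat N lam) $$ (i,k) = Y $$ (i,k) * lam k"
      by (rule index_mult_diag_vec_mat[OF Y_carr i k])
    then show "col (Y * diag_vec_mat N lam) k $ i = (lam k \<cdot>\<^sub>v eigvec k) $ i"
      using i k Y_carr unfolding eigvec_def by simp
  qed (use Y_carr in simp)
  finally show ?thesis .
qed

lemma row_Yi_eigvec: "l < N \<Longrightarrow> k < N \<Longrightarrow> row Yi l \<bullet> eigvec k = (if l = k then 1 else 0)"
  using arg_cong[OF Yi_Y, of "\<lambda>M. M $$ (l,k)"] Y_carr Yi_carr unfolding eigvec_def by simp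

lemma eigvec_nonzero: "k < N \<Longrightarrow> eigvec k \<noteq> 0\<^sub>v N"
  using row_Yi_eigvec[of k k] Yi_carr by auto

lemma eigvec_0_const: "eigvec 0 = eigvec 0 $ 0 \<cdot>\<^sub>v ones_vec N" "eigvec 0 $ 0 \<noteq> 0"
proof -
  have "A\<^sup>T *\<^sub>v eigvec 0 = 1 \<cdot>\<^sub>v eigvec 0"
    using Abar_transpose_eigenvector[OF _ Abar_transpose_eigvec[OF N_pos]] lam_first by simp
  from primitive_stochastic_unimodular_eigenvector_const[OF A_carr prim stoch _ this]
  show const: "eigvec 0 = eigvec 0 $ 0 \<cdot>\<^sub>v ones_vec N" by simp
  show "eigvec 0 $ 0 \<noteq> 0"
  proof
    assume "eigvec 0 $ 0 = 0"
    then have "eigvec 0 = 0\<^sub>v N" by (subst const) auto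
    with eigvec_nonzero[OF N_pos] show False by simp
  qed
qed

lemma row_Yi_ones: "1 \<le> k \<Longrightarrow> k < N \<Longrightarrow> row Yi k \<bullet> ones_vec N = 0"
proof -
  assume k: "1 \<le> k" "k < N"
  have "row Yi k \<bullet> eigvec 0 = eigvec 0 $ 0 * (row Yi k \<bullet> ones_vec N)"
    by (subst eigvec_0_const(1)) (use Yi_carr in simp)
  then show ?thesis using row_Yi_eigvec[OF k(2) N_pos] k eigvec_0_const(2) by simp
qed

lemma eigenvalue_bounds:
  assumes k: "1 \<le> k" "k < N"
  shows "0 < lam k" "lam k < 1"
proof -
  have eig: "A\<^sup>T *\<^sub>v eigvec k = (2 * lam k - 1) \<cdot>\<^sub>v eigvec k"
    by (rule Abar_transpose_eigenvector[OF _ Abar_transpose_eigvec[OF k(2)]]) simp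
  have nonneg: "\<forall>i<N. \<forall>j<N. A\<^sup>T $$ (i,j) \<ge> 0" using prim unfolding primitive_mat_def by simp
  have row_sums: "\<forall>i<N. (\<Sum>j<N. A\<^sup>T $$ (i,j)) = 1"
  proof (intro allI impI)
    fix i assume i: "i < N"
    have "(A\<^sup>T *\<^sub>v ones_vec N) $ i = 1" using stoch i by simp
    then show "(\<Sum>j<N. A\<^sup>T $$ (i,j)) = 1"
      using index_mult_mat_vec_sum[OF carriers(2) ones_vec_carrier(1) i] i by simp
  qed
  have "\<bar>2 * lam k - 1\<bar> \<le> 1"
    by (rule stochastic_eigenvalue_abs_le_1[OF carriers(2) nonneg row_sums _ eigvec_nonzero[OF k(2)] eig]) simp
  moreover have "\<bar>2 * lam k - 1\<bar> \<noteq> 1"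
  proof
    assume "\<bar>2 * lam k - 1\<bar> = 1"
    from primitive_stochastic_unimodular_eigenvector_const[OF A_carr prim stoch _ eig this]
    have const: "eigvec k = eigvec k $ 0 \<cdot>\<^sub>v ones_vec N" by simp
    have "row Yi k \<bullet> eigvec k = eigvec k $ 0 * (row Yi k \<bullet> ones_vec N)"
      by (subst const) (use Yi_carr in simp)
    then show False using row_Yi_eigvec[OF k(2) k(2)] row_Yi_ones[OF k] by simp
  qed
  ultimately show "0 < lam k" "lam k < 1" by auto
qed

lemma p_scalar_eigvec: "1 \<le> k \<Longrightarrow> k < N \<Longrightarrow> p \<bullet> eigvec k = 0"
proof -
  assume k: "1 \<le> k" "k < N"
  have "p \<bullet> eigvec k = lam k * (p \<bullet> eigvec k)"
    using p_scalar_Abar_transpose[of "eigvec k"] by (simp add: Abar_transpose_eigvec[OF k(2)])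
  then show ?thesis using eigenvalue_bounds[OF k] by simp
qed

definition "dual_V k = V *\<^sub>v (Pinv *\<^sub>v row Yi k)"

lemma dual_V_carrier [simp]: "dual_V k \<in> carrier_vec N"
  unfolding dual_V_def by simp

lemma dual_V_scalar_V_eigvec:
  "k < N \<Longrightarrow> l < N \<Longrightarrow> dual_V k \<bullet> (V *\<^sub>v eigvec l) = (if k = l then 1 - lam l else 0)"
proof -
  assume k: "k < N" and l: "l < N"
  have "dual_V k \<bullet> (V *\<^sub>v eigvec l) = (Pinv *\<^sub>v row Yi k) \<bullet> (V *\<^sub>v (V *\<^sub>v eigvec l))"
    unfolding dual_V_def by (simp add: symmetric_mat_scalar_prod[of _ N] V_transpose)
  also have "\<dots> = row Yi k \<bullet> ((1 - lam l) \<cdot>\<^sub>v eigvec l)"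
    unfolding Pinv_V_V_eigenvector[OF _ Abar_transpose_eigvec[OF l], symmetric, simplified]
    by (simp add: symmetric_mat_scalar_prod[of _ N] Pinv_def)
  finally show ?thesis using row_Yi_eigvec[OF k l] Yi_carr by simp
qed

lemma dual_V_scalar_ones: "dual_V k \<bullet> ones_vec N = 0"
  unfolding dual_V_def by (simp add: symmetric_mat_scalar_prod[of _ N] V_transpose V_ones)

(* On the plane of (y,0) and (0,V y) the matrix B acts by [[lam, lam - 1], [lam, lam]]
   (B_mult_eigenvector_top/bottom), with eigenvectors (y,0) -+ i r (0,V y) for the eigenvalues
   lam +- i s, where r = sqrt(lam/(1 - lam)) and s = sqrt(lam (1 - lam)).  Column j of X uses
   the pair k = j div 2, with the upper sign for even j. *)
definition "eig_ratio k = sqrt (lam k / (1 - lam k))"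

definition "eig_imag k = sqrt (lam k * (1 - lam k))"

definition "col_sign j = (if even j then 1 else - 1 :: real)"

definition "col_weight j = Complex 0 (- col_sign j * eig_ratio (j div 2))"

definition "row_weight j = Complex 0 (col_sign j / (2 * eig_ratio (j div 2) * (1 - lam (j div 2))))"

definition "col_eigenvalue j =
  (if j < 2 then 1 else Complex (lam (j div 2)) (col_sign j * eig_imag (j div 2)))"

lemma eig_ratio_imag:
  assumes "1 \<le> k" "k < N"
  shows "eig_ratio k > 0" "eig_ratio k * (1 - lam k) = eig_imag k" "eig_imag k * eig_ratio k = lam k"
    "(eig_imag k)\<^sup>2 = lam k * (1 - lam k)"
proof -
  have l: "0 < lam k" "lam k < 1" using eigenvalue_bounds[OF assms] by auto
  show "eig_ratio k > 0" unfolding eig_ratio_def using l by simp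
  have "eig_ratio k * (1 - lam k) = sqrt (lam k / (1 - lam k)) * sqrt ((1 - lam k)\<^sup>2)"
    unfolding eig_ratio_def using l by simp
  also have "\<dots> = sqrt (lam k / (1 - lam k) * (1 - lam k)\<^sup>2)" by (rule real_sqrt_mult[symmetric])
  finally show "eig_ratio k * (1 - lam k) = eig_imag k"
    unfolding eig_imag_def using l by (simp add: power2_eq_square)
  have "eig_imag k * eig_ratio k = sqrt ((lam k)\<^sup>2)"
    unfolding eig_ratio_def eig_imag_def using l by (simp add: real_sqrt_mult[symmetric] power2_eq_square)
  then show "eig_imag k * eig_ratio k = lam k" using l by simp
  show "(eig_imag k)\<^sup>2 = lam k * (1 - lam k)" unfolding eig_imag_def using l by simp
qed

lemma col_eigenvalue_norm:
  assumes "1 \<le> k" "k < N" "j div 2 = k"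
  shows "cmod (col_eigenvalue j) = sqrt (lam k)"
proof -
  have "2 \<le> j" using assms by auto
  then have "cmod (col_eigenvalue j) = sqrt ((lam k)\<^sup>2 + (eig_imag k)\<^sup>2)"
    unfolding col_eigenvalue_def cmod_def using assms by (simp add: col_sign_def power_mult_distrib)
  also have "\<dots> = sqrt (lam k)" using eig_ratio_imag(4)[OF assms(1,2)] by (simp add: algebra_simps power2_eq_square)
  finally show ?thesis .
qed

lemma B_complex_mult_cvec:
  "v \<in> carrier_vec (2 * N) \<Longrightarrow> map_mat complex_of_real B *\<^sub>v cvec v = cvec (B *\<^sub>v v)"
  by (rule of_real_hom.mult_mat_vec_hom[symmetric, OF B_carrier])

definition "X_col j =
  (if j = 0 then cpair 1 (ones_vec N) 1 (0\<^sub>v N)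
   else if j = 1 then cpair 1 (0\<^sub>v N) 1 (ones_vec N)
   else cpair 1 (eigvec (j div 2)) (col_weight j) (V *\<^sub>v eigvec (j div 2)))"

lemma X_col_carrier [simp]: "X_col j \<in> carrier_vec (2 * N)" "dim_vec (X_col j) = 2 * N"
  unfolding X_col_def mult_2 by simp_all

lemma col_weight_col_eigenvalue:
  assumes k: "1 \<le> k" "k < N" and j: "2 \<le> j" "j div 2 = k"
  shows "of_real (lam k) + col_weight j * of_real (lam k - 1) = col_eigenvalue j"
    "of_real (lam k) + col_weight j * of_real (lam k) = col_eigenvalue j * col_weight j"
proof -
  have r: "eig_ratio k * (1 - lam k) = eig_imag k" "eig_imag k * eig_ratio k = lam k"
    using eig_ratio_imag[OF k] by auto
  show "of_real (lam k) + col_weight j * of_real (lam k - 1) = col_eigenvalue j"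
    using j r(1) unfolding col_weight_def col_eigenvalue_def
    by (simp add: complex_eq_iff algebra_simps col_sign_def)
  show "of_real (lam k) + col_weight j * of_real (lam k) = col_eigenvalue j * col_weight j"
    using j r(2) unfolding col_weight_def col_eigenvalue_def
    by (simp add: complex_eq_iff algebra_simps col_sign_def)
qed

lemma B_complex_X_col_pair:
  assumes j: "2 \<le> j" "j < 2 * N"
  shows "map_mat complex_of_real B *\<^sub>v X_col j = col_eigenvalue j \<cdot>\<^sub>v X_col j"
proof -
  define k where "k = j div 2"
  have k: "1 \<le> k" "k < N" using j unfolding k_def by auto
  define y where "y = eigvec k"
  have y: "y \<in> carrier_vec N" and eig: "Abar\<^sup>T *\<^sub>v y = lam k \<cdot>\<^sub>v y"
    unfolding y_def using Abar_transpose_eigvec[OF k(2)] by auto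
  define e1 where "e1 = y @\<^sub>v 0\<^sub>v N"
  define e2 where "e2 = 0\<^sub>v N @\<^sub>v V *\<^sub>v y"
  have e: "e1 \<in> carrier_vec (2 * N)" "e2 \<in> carrier_vec (2 * N)"
    unfolding e1_def e2_def mult_2 using y by auto
  have "X_col j = cvec e1 + col_weight j \<cdot>\<^sub>v cvec e2"
    unfolding X_col_def e1_def e2_def y_def k_def using j by (intro eq_vecI) (auto simp: cpair_def)
  also have "map_mat complex_of_real B *\<^sub>v \<dots> = col_eigenvalue j \<cdot>\<^sub>v \<dots>"
  proof (rule mult_mat_vec_invariant_plane)
    show "map_mat complex_of_real B *\<^sub>v cvec e1 = of_real (lam k) \<cdot>\<^sub>v cvec e1 + of_real (lam k) \<cdot>\<^sub>v cvec e2"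
      unfolding B_complex_mult_cvec[OF e(1)] unfolding e1_def e2_def B_mult_eigenvector_top[OF y eig]
      using y by (simp add: cvec_lincomb)
    show "map_mat complex_of_real B *\<^sub>v cvec e2 = of_real (lam k - 1) \<cdot>\<^sub>v cvec e1 + of_real (lam k) \<cdot>\<^sub>v cvec e2"
      unfolding B_complex_mult_cvec[OF e(2)] unfolding e1_def e2_def B_mult_eigenvector_bottom[OF y eig]
      using y by (simp add: cvec_lincomb)
  qed (use e B_carrier col_weight_col_eigenvalue[OF k j(1) k_def[symmetric]] in auto)
  finally show ?thesis .
qed

lemma B_complex_X_col: "j < 2 * N \<Longrightarrow> map_mat complex_of_real B *\<^sub>v X_col j = col_eigenvalue j \<cdot>\<^sub>v X_col j"
proof -
  assume j: "j < 2 * N"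
  consider "j = 0" | "j = 1" | "2 \<le> j" by linarith
  then show ?thesis
  proof cases
    case 1
    have "X_col j = cvec (ones_vec N @\<^sub>v 0\<^sub>v N)" unfolding 1 X_col_def cpair_def cvec_append by simp
    then show ?thesis using 1 B_complex_mult_cvec[of "ones_vec N @\<^sub>v 0\<^sub>v N"]
      by (simp add: B_fixes_ones_top col_eigenvalue_def mult_2)
  next
    case 2
    have "X_col j = cvec (0\<^sub>v N @\<^sub>v ones_vec N)" unfolding 2 X_col_def cpair_def cvec_append by simp
    then show ?thesis using 2 B_complex_mult_cvec[of "0\<^sub>v N @\<^sub>v ones_vec N"]
      by (simp add: B_fixes_ones_bottom col_eigenvalue_def mult_2)
  qed (rule B_complex_X_col_pair[OF _ j])
qed

(* Against the rows (row Yi k, 0) and (0, dual_V k / (1 - lam k)) the columns 2k, 2k+1 of X form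
   the matrix [[1, 1], [-i r, i r]]; the rows 2k, 2k+1 of Xi combine them by its inverse. *)
definition "Xi_row j =
  (if j = 0 then cpair 1 p 1 (0\<^sub>v N)
   else if j = 1 then cpair 1 (0\<^sub>v N) (1 / of_nat N) (ones_vec N)
   else cpair (1/2) (row Yi (j div 2)) (row_weight j) (dual_V (j div 2)))"

lemma Xi_row_carrier [simp]: "Xi_row j \<in> carrier_vec (2 * N)" "dim_vec (Xi_row j) = 2 * N"
  unfolding Xi_row_def mult_2 by simp_all

lemma row_weight_col_weight:
  assumes k: "1 \<le> k" "k < N" and jl: "j div 2 = k" "l div 2 = k"
  shows "1/2 + row_weight j * col_weight l * complex_of_real (1 - lam k) = (if j = l then 1 else 0)"
proof -
  have r: "eig_ratio k > 0" using eig_ratio_imag[OF k] by simp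
  have l1: "1 - lam k > 0" using eigenvalue_bounds[OF k] by simp
  have sign: "j = l \<longleftrightarrow> col_sign j = col_sign l"
    using jl by (auto simp: col_sign_def) presburger+
  have "row_weight j * col_weight l = complex_of_real (col_sign j * col_sign l / (2 * (1 - lam k)))"
    unfolding row_weight_def col_weight_def jl using r by (simp add: complex_eq_iff)
  then have "row_weight j * col_weight l * complex_of_real (1 - lam k)
      = complex_of_real (col_sign j * col_sign l / (2 * (1 - lam k)) * (1 - lam k))"
    by simp
  also have "col_sign j * col_sign l / (2 * (1 - lam k)) * (1 - lam k) = col_sign j * col_sign l / 2"
    using l1 by (simp add: field_simps)
  finally have prod: "row_weight j * col_weight l * complex_of_real (1 - lam k)
      = complex_of_real (col_sign j * col_sign l / 2)" .
  show ?thesis unfolding prod using sign by (auto simp: col_sign_def)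
qed

lemma Xi_row_pair_X_col:
  assumes j: "2 \<le> j" "j < 2 * N" and l: "l < 2 * N"
  shows "Xi_row j \<bullet> X_col l = (if j = l then 1 else 0)"
proof -
  define k where "k = j div 2"
  have k: "1 \<le> k" "k < N" using j unfolding k_def by auto
  note prods = cpair_scalar_prod[of _ N _ _ N]
  consider "l = 0" | "l = 1" | "2 \<le> l" by linarith
  then show ?thesis
  proof cases
    case 1
    then show ?thesis using j row_Yi_ones[OF k] by (auto simp: Xi_row_def X_col_def prods k_def[symmetric])
  next
    case 2
    then show ?thesis using j dual_V_scalar_ones by (auto simp: Xi_row_def X_col_def prods k_def[symmetric])
  next
    case 3
    define k' where "k' = l div 2"
    have k': "k' < N" using l unfolding k'_def by auto
    have "Xi_row j \<bullet> X_col l = 1/2 * (row Yi k \<bullet> eigvec k')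
        + row_weight j * col_weight l * (dual_V k \<bullet> (V *\<^sub>v eigvec k'))"
      using j 3 by (simp add: Xi_row_def X_col_def prods k_def[symmetric] k'_def[symmetric])
    also have "\<dots> = (if k = k' then 1/2 + row_weight j * col_weight l * (1 - lam k) else 0)"
      using row_Yi_eigvec[OF k(2) k'] dual_V_scalar_V_eigvec[OF k(2) k'] by simp
    also have "\<dots> = (if j = l then 1 else 0)"
      using row_weight_col_weight[OF k, of j l] unfolding k_def k'_def by auto
    finally show ?thesis .
  qed
qed

lemma Xi_row_X_col:
  assumes j: "j < 2 * N" and l: "l < 2 * N"
  shows "Xi_row j \<bullet> X_col l = (if j = l then 1 else 0)"
proof -
  have p_ones: "p \<bullet> ones_vec N = 1" using p_sum comm_scalar_prod[OF carriers(10) ones_vec_carrier(1)] by simp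
  have ones_ones: "ones_vec N \<bullet> ones_vec N = real N" by (simp add: scalar_prod_def)
  have N0: "real N \<noteq> 0" using N_pos by simp
  note prods = cpair_scalar_prod[of _ N _ _ N] p_ones ones_ones ones_scalar_V
  consider "j = 0" | "j = 1" | "2 \<le> j" by linarith
  then show ?thesis
  proof cases
    case 1
    then show ?thesis using l p_scalar_eigvec[of "l div 2"] by (auto simp: Xi_row_def X_col_def prods)
  next
    case 2
    then show ?thesis using l N0 by (auto simp: Xi_row_def X_col_def prods)
  qed (rule Xi_row_pair_X_col[OF _ j l])
qed

definition "X = mat (2 * N) (2 * N) (\<lambda>(i,j). X_col j $ i)"

definition "Xi = mat (2 * N) (2 * N) (\<lambda>(j,i). Xi_row j $ i)"

definition "D1 = diag_vec_mat (2 * N - 2) (\<lambda>m. col_eigenvalue (m + 2))"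

lemma X_carrier: "X \<in> carrier_mat (2 * N) (2 * N)" and Xi_carrier: "Xi \<in> carrier_mat (2 * N) (2 * N)"
  by (simp_all add: X_def Xi_def)

lemma col_X: "j < 2 * N \<Longrightarrow> col X j = X_col j"
  by (rule eq_vecI) (auto simp: X_def)

lemma row_Xi: "j < 2 * N \<Longrightarrow> row Xi j = Xi_row j"
  by (rule eq_vecI) (auto simp: Xi_def)

lemma Xi_mult_X: "Xi * X = 1\<^sub>m (2 * N)"
  by (rule eq_matI) (use X_carrier Xi_carrier in \<open>auto simp: row_Xi col_X Xi_row_X_col\<close>)

lemma X_mult_Xi: "X * Xi = 1\<^sub>m (2 * N)"
  by (rule mat_mult_left_right_inverse[OF Xi_carrier X_carrier Xi_mult_X])

lemma B_complex_mult_X: "map_mat complex_of_real B * X = X * diag_vec_mat (2 * N) col_eigenvalue"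
proof (rule eq_matI)
  fix i j assume "i < dim_row (X * diag_vec_mat (2 * N) col_eigenvalue)"
    "j < dim_col (X * diag_vec_mat (2 * N) col_eigenvalue)"
  then have i: "i < 2 * N" and j: "j < 2 * N" using X_carrier by auto
  have "(map_mat complex_of_real B * X) $$ (i,j) = (map_mat complex_of_real B *\<^sub>v X_col j) $ i"
    using i j B_carrier X_carrier by (simp add: col_X[symmetric])
  also have "\<dots> = X $$ (i,j) * col_eigenvalue j"
    unfolding B_complex_X_col[OF j] using i j X_col_carrier[of j] by (simp add: X_def mult.commute)
  also have "\<dots> = (X * diag_vec_mat (2 * N) col_eigenvalue) $$ (i,j)"
    by (rule index_mult_diag_vec_mat[symmetric, OF X_carrier i j])
  finally show "(map_mat complex_of_real B * X) $$ (i,j) = (X * diag_vec_mat (2 * N) col_eigenvalue) $$ (i,j)" .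
qed (use B_carrier X_carrier in auto)

lemma diag_col_eigenvalue_blocks:
  "four_block_mat (1\<^sub>m 2) (0\<^sub>m 2 (2 * N - 2)) (0\<^sub>m (2 * N - 2) 2) D1 = diag_vec_mat (2 * N) col_eigenvalue"
proof -
  have "Suc (Suc (j - 2)) = j" "Suc ((j - 2) div 2) = j div 2" if "\<not> j < 2" for j :: nat
    using that by arith+
  then show ?thesis using N_pos by (intro eq_matI) (auto simp: D1_def col_eigenvalue_def)
qed

lemma B_complex_decomposition:
  "map_mat complex_of_real B = X * four_block_mat (1\<^sub>m 2) (0\<^sub>m 2 (2 * N - 2)) (0\<^sub>m (2 * N - 2) 2) D1 * Xi"
proof -
  have "map_mat complex_of_real B = map_mat complex_of_real B * (X * Xi)"
    unfolding X_mult_Xi using B_carrier by simp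
  also have "\<dots> = X * diag_vec_mat (2 * N) col_eigenvalue * Xi"
    unfolding B_complex_mult_X[symmetric] using B_carrier X_carrier Xi_carrier
    by (simp add: assoc_mult_mat[of _ "2 * N" "2 * N" _ "2 * N" _ "2 * N"])
  finally show ?thesis unfolding diag_col_eigenvalue_blocks .
qed

lemma X_first_columns:
  "i < 2 * N \<Longrightarrow> X $$ (i,0) = (if i < N then 1 else 0) \<and> X $$ (i,1) = (if i < N then 0 else 1)"
  using N_pos by (simp add: X_def X_col_def index_cpair)

lemma Xi_first_rows:
  "j < 2 * N \<Longrightarrow> Xi $$ (0,j) = (if j < N then complex_of_real (p $ j) else 0) \<and>
    Xi $$ (1,j) = (if j < N then 0 else 1 / of_nat N)"
  using N_pos by (simp add: Xi_def Xi_row_def index_cpair)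

lemma D1_moduli:
  assumes "k \<in> {1..<N}"
  shows "cmod (D1 $$ (2*k-2, 2*k-2)) = sqrt (lam k) \<and> cmod (D1 $$ (2*k-1, 2*k-1)) = sqrt (lam k) \<and>
    sqrt (lam k) < 1"
proof -
  have k: "1 \<le> k" "k < N" using assms by auto
  have "D1 $$ (2*k-2, 2*k-2) = col_eigenvalue (2*k)" "D1 $$ (2*k-1, 2*k-1) = col_eigenvalue (2*k+1)"
    using k by (auto simp: D1_def Suc_diff_Suc numeral_2_eq_2)
  then show ?thesis
    using col_eigenvalue_norm[OF k, of "2*k"] col_eigenvalue_norm[OF k, of "2*k+1"] eigenvalue_bounds[OF k]
    by simp
qed

end

theorem lemma4:
  fixes N :: nat and A U \<Sigma> :: "real mat" and p :: "real vec" and lam :: "nat \<Rightarrow> real"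
  assumes A_carr: "A \<in> carrier_mat N N"
    and prim: "primitive_mat A"
    and stoch: "A\<^sup>T *\<^sub>v ones_vec N = ones_vec N"
    and p_dim: "p \<in> carrier_vec N"
    and p_fix: "A *\<^sub>v p = p"
    and p_sum: "ones_vec N \<bullet> p = 1"
    and p_pos: "\<forall>i<N. p $ i > 0"
    and balance: "diag_vec_mat N (\<lambda>i. p $ i) * A\<^sup>T = A * diag_vec_mat N (\<lambda>i. p $ i)"
    and U_carr: "U \<in> carrier_mat N N"
    and U_orth: "U * U\<^sup>T = 1\<^sub>m N" "U\<^sup>T * U = 1\<^sub>m N"
    and Sig_carr: "\<Sigma> \<in> carrier_mat N N"
    and Sig_diag: "diagonal_mat \<Sigma>"
    and Sig_nonneg: "\<forall>i<N. \<Sigma> $$ (i,i) \<ge> 0"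
    and eig_dec: "(1/2) \<cdot>\<^sub>m (diag_vec_mat N (\<lambda>i. p $ i) - A * diag_vec_mat N (\<lambda>i. p $ i))
                    = U * \<Sigma> * U\<^sup>T"
    and lam_eigs: "char_poly ((1/2) \<cdot>\<^sub>m (1\<^sub>m N + A)) = (\<Prod>k<N. [:- lam k, 1:])"
    and lam_first: "lam 0 = 1"
  shows "let P = diag_vec_mat N (\<lambda>i. p $ i);
             Pinv = diag_vec_mat N (\<lambda>i. 1 / p $ i);
             Abar = (1/2) \<cdot>\<^sub>m (1\<^sub>m N + A);
             V = U * diag_vec_mat N (\<lambda>i. sqrt (\<Sigma> $$ (i,i))) * U\<^sup>T;
             B = four_block_mat (Abar\<^sup>T) (- (Pinv * V)) (V * Abar\<^sup>T) (1\<^sub>m N - V * Pinv * V)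
         in \<exists>(X :: complex mat) (Xi :: complex mat) (D1 :: complex mat).
              X \<in> carrier_mat (2*N) (2*N) \<and> Xi \<in> carrier_mat (2*N) (2*N) \<and>
              X * Xi = 1\<^sub>m (2*N) \<and> Xi * X = 1\<^sub>m (2*N) \<and>
              D1 \<in> carrier_mat (2*N-2) (2*N-2) \<and> diagonal_mat D1 \<and>
              map_mat complex_of_real B
                = X * four_block_mat (1\<^sub>m 2) (0\<^sub>m 2 (2*N-2)) (0\<^sub>m (2*N-2) 2) D1 * Xi \<and>
              (\<forall>k\<in>{1..<N}.
                  cmod (D1 $$ (2*k-2, 2*k-2)) = sqrt (lam k) \<and>
                  cmod (D1 $$ (2*k-1, 2*k-1)) = sqrt (lam k) \<and>
                  sqrt (lam k) < 1) \<and>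
              (\<forall>i<2*N. X $$ (i,0) = (if i < N then 1 else 0) \<and>
                        X $$ (i,1) = (if i < N then 0 else 1)) \<and>
              (\<forall>j<2*N. Xi $$ (0,j) = (if j < N then complex_of_real (p $ j) else 0) \<and>
                        Xi $$ (1,j) = (if j < N then 0 else 1 / of_nat N))"
proof -
  interpret exact_diffusion N A U \<Sigma> p lam
    by (rule exact_diffusion.intro) (fact assms)+
  obtain Y Yi where Y: "Y \<in> carrier_mat N N" "Yi \<in> carrier_mat N N" "Yi * Y = 1\<^sub>m N"
    "Abar\<^sup>T * Y = Y * diag_vec_mat N lam"
    by (rule Abar_transpose_diagonalization)
  interpret exact_diffusion_eigenbasis N A U \<Sigma> p lam Y Yi
    by (rule exact_diffusion_eigenbasis.intro, unfold_locales) (fact Y)+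
  have D1: "D1 \<in> carrier_mat (2*N-2) (2*N-2)" "diagonal_mat D1"
    by (auto simp: D1_def diagonal_mat_def)
  show ?thesis
    unfolding Let_def B_complex_decomposition[unfolded B_def Abar_def Pinv_def V_def]
    using X_carrier Xi_carrier X_mult_Xi Xi_mult_X D1 D1_moduli X_first_columns Xi_first_rows
    by blast
qed

end
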